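(* Under the standing assumptions, for every $p^*\in X^*$: (i) $v(P_{p^*})\ge v(D^F_{p^*})$ if and only if $\Omega\cap B_{p^*}\subseteq\operatorname{epi}(f-g+\delta_A)^c\cap B_{p^*}$; (ii) $v(P_{p^*})\ge v(\bar D^F_{p^*})$ if and only if $K\cap B_{p^*}\subseteq\operatorname{epi}(f-g+\delta_A)^c\cap B_{p^*}$.
   Context: Let $X$ be a nontrivial separated locally convex space with topological dual $X^*$, endowed with the topology $\sigma(X,X^* )$; $\langle x,x^*\rangle$ is the value of $x^*\in X^*$ at $x\in X$. Put $W:=X^*\times X^*\times\mathbb{R}$, $\mathbb{R}_{++}:=]0,+\infty[$ and $Z:=X^*\times X^*\times\mathbb{R}_{++}$. For $y^*\in X^*$, $\alpha\in\mathbb{R}$, let $H^-_{y^*,\alpha}:=\{x\in X:\langle x,y^*\rangle<\alpha\}$. The coupling function $c:X\times W\to\overline{\mathbb{R}}$ is $c(x,(x^*,y^*,\alpha)):=\langle x,x^*\rangle$ if $\langle x,y^*\rangle<\alpha$ and $:=+\infty$ otherwise. For $h:X\to\overline{\mathbb{R}}$ its $c$-conjugate is $h^c:W\to\overline{\mathbb{R}}$, $h^c(w):=\sup_{x\in X}\{c(x,w)-h(x)\}$, with the convention $(+\infty)+(-\infty)=(-\infty)+(+\infty)=(+\infty)-(+\infty)=(-\infty)-(-\infty)=-\infty$ (so for proper $h$, $h^c(x^*,y^*,\alpha)=h^*(x^* )$ if $\operatorname{dom}h\subseteq H^-_{y^*,\alpha}$ and $+\infty$ otherwise). Epigraphs of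 functions on $W$ are subsets of $W\times\mathbb{R}$. $\delta_A$ is the indicator function of $A$. For $E\subseteq W\times\mathbb{R}$ and $e\in W\times\mathbb{R}$, $E-e:=\{z-e:z\in E\}$. Standing assumptions: $f,g:X\to\overline{\mathbb{R}}$ proper convex with $\operatorname{dom}f\subseteq\operatorname{dom}g$, $A\subseteq X$ nonempty, convention $(+\infty)-(+\infty)=+\infty$ in $f-g$. For $p^*\in X^*$: $(P_{p^*})$ is $\inf_{x\in A}\{f(x)-g(x)+\langle x,p^*\rangle\}$ with value $v(P_{p^*})$; with $\varphi_{p^*}(u^*,v^*,\gamma;x^*,y^*,\alpha):=g^c(u^*,v^*,\gamma)-f^c(u^*-x^*-p^*,-y^*,\alpha)-\delta_A^c(x^*,y^*,\alpha)$, the duals are $v(D^F_{p^*}):=\sup_{(x^*,y^*,\alpha)\in Z}\inf_{(u^*,v^*,\gamma)\in\operatorname{dom}g^c}\varphi_{p^*}$ and $v(\bar D^F_{p^*}):=\inf_{(u^*,v^*,\gamma)\in\operatorname{dom}g^c}\sup_{(x^*,y^*,\alpha)\in Z}\varphi_{p^*}$. Sets: $B_{p^*}:=\{-p^*\}\times\{0\}\times\mathbb{R}_{++}\times\mathbb{R}\subseteq W\times\mathbb{R}$; $\Omega:=\bigcup_{(x^*,y^*,\alpha)\in\operatorname{dom}\delta_A^c}\ \bigcap_{(u^*,v^*,\gamma)\in\operatorname{dom}g^c}\Big[\operatorname{epi}\big(f-c(\cdot,(-x^*,-y^*,\alpha))\big)^c-\big(u^*,0,0,g^c(u^*,v^*,\gamma)-\delta_A^c(x^*,y^*,\alpha)\big)\Big]$,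 $K:=\bigcap_{(u^*,v^*,\gamma)\in\operatorname{dom}g^c}\ \bigcup_{(x^*,y^*,\alpha)\in\operatorname{dom}\delta_A^c}\Big[\operatorname{epi}\big(f-c(\cdot,(-x^*,-y^*,\alpha))\big)^c-\big(u^*,0,0,g^c(u^*,v^*,\gamma)-\delta_A^c(x^*,y^*,\alpha)\big)\Big]$. *)

theory Defs
  imports "HOL-Analysis.Analysis"
begin

text \<open>The dual pair (X, X*): X is a real vector space (type 'a), X* is a set D of
linear functionals on X forming a linear subspace that separates points.  This is
exactly the data of a separated locally convex space endowed with sigma(X,X*).\<close>

definition dual_pair :: "('a::real_vector \<Rightarrow> real) set \<Rightarrow> bool" where
  "dual_pair D \<longleftrightarrow> (\<forall>l\<in>D. linear l) \<and> (\<lambda>_. 0) \<in> D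
     \<and> (\<forall>l\<in>D. \<forall>m\<in>D. (\<lambda>x. l x + m x) \<in> D)
     \<and> (\<forall>l\<in>D. \<forall>c::real. (\<lambda>x. c * l x) \<in> D)
     \<and> (\<forall>x. x \<noteq> 0 \<longrightarrow> (\<exists>l\<in>D. l x \<noteq> 0))"

type_synonym 'a Wt = "('a \<Rightarrow> real) \<times> ('a \<Rightarrow> real) \<times> real"

definition Wset :: "('a \<Rightarrow> real) set \<Rightarrow> 'a Wt set" where
  "Wset D = D \<times> D \<times> UNIV"

definition Zset :: "('a \<Rightarrow> real) set \<Rightarrow> 'a Wt set" where
  "Zset D = D \<times> D \<times> {0<..}"

definition WRset :: "('a \<Rightarrow> real) set \<Rightarrow> ('a Wt \<times> real) set" where
  "WRset D = Wset D \<times> UNIV"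

definition cpl :: "'a \<Rightarrow> 'a Wt \<Rightarrow> ereal" where
  "cpl x w = (case w of (xs, ys, \<alpha>) \<Rightarrow> if ys x < \<alpha> then ereal (xs x) else \<infinity>)"

text \<open>subtraction with the conjugation convention: inf - inf = -inf - (-inf) = -inf\<close>
definition csub :: "ereal \<Rightarrow> ereal \<Rightarrow> ereal" where
  "csub a b = (if (a = \<infinity> \<and> b = \<infinity>) \<or> (a = -\<infinity> \<and> b = -\<infinity>) then -\<infinity> else a - b)"

text \<open>subtraction with the convention inf - inf = +inf (used in f - g)\<close>
definition fsub :: "ereal \<Rightarrow> ereal \<Rightarrow> ereal" where
  "fsub a b = (if a = \<infinity> \<and> b = \<infinity> then \<infinity> else a - b)"

definition cconj :: "('a \<Rightarrow> ereal) \<Rightarrow> 'a Wt \<Rightarrow> ereal" where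
  "cconj h w = (SUP x. csub (cpl x w) (h x))"

definition cdom :: "('a \<Rightarrow> real) set \<Rightarrow> ('a Wt \<Rightarrow> ereal) \<Rightarrow> 'a Wt set" where
  "cdom D k = {w \<in> Wset D. k w < \<infinity>}"

definition epiW :: "('a \<Rightarrow> real) set \<Rightarrow> ('a Wt \<Rightarrow> ereal) \<Rightarrow> ('a Wt \<times> real) set" where
  "epiW D k = {(w, r). w \<in> Wset D \<and> k w \<le> ereal r}"

definition shiftW :: "('a Wt \<times> real) set \<Rightarrow> 'a Wt \<times> real \<Rightarrow> ('a Wt \<times> real) set" where
  "shiftW E e = (case e of ((a, b, c), d) \<Rightarrow>
     (\<lambda>((x, y, z), r). ((\<lambda>t. x t - a t, \<lambda>t. y t - b t, z - c), r - d)) ` E)"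

definition indic :: "'a set \<Rightarrow> 'a \<Rightarrow> ereal" where
  "indic A x = (if x \<in> A then 0 else \<infinity>)"

definition proper_convex :: "('a::real_vector \<Rightarrow> ereal) \<Rightarrow> bool" where
  "proper_convex f \<longleftrightarrow> (\<forall>x. f x \<noteq> -\<infinity>) \<and> (\<exists>x. f x < \<infinity>)
     \<and> convex {(x, r::real). f x \<le> ereal r}"

definition fmc :: "('a \<Rightarrow> ereal) \<Rightarrow> ('a \<Rightarrow> real) \<Rightarrow> ('a \<Rightarrow> real) \<Rightarrow> real \<Rightarrow> 'a \<Rightarrow> ereal" where
  "fmc f xs ys \<alpha> = (\<lambda>x. fsub (f x) (cpl x (\<lambda>t. - xs t, \<lambda>t. - ys t, \<alpha>)))"

definition Bset :: "('a \<Rightarrow> real) \<Rightarrow> ('a Wt \<times> real) set" where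
  "Bset p = {((\<lambda>x. - p x, \<lambda>_. 0, r), s) | r s. r > 0}"

definition Omega :: "('a \<Rightarrow> real) set \<Rightarrow> ('a \<Rightarrow> ereal) \<Rightarrow> ('a \<Rightarrow> ereal) \<Rightarrow> 'a set \<Rightarrow> ('a Wt \<times> real) set" where
  "Omega D f g A = (\<Union>(xs, ys, \<alpha>) \<in> cdom D (cconj (indic A)).
     {z \<in> WRset D. \<forall>(u, v, \<gamma>) \<in> cdom D (cconj g).
        z \<in> shiftW (epiW D (cconj (fmc f xs ys \<alpha>)))
               ((u, \<lambda>_. 0, 0), real_of_ereal (csub (cconj g (u, v, \<gamma>)) (cconj (indic A) (xs, ys, \<alpha>))))})"

definition Kset :: "('a \<Rightarrow> real) set \<Rightarrow> ('a \<Rightarrow> ereal) \<Rightarrow> ('a \<Rightarrow> ereal) \<Rightarrow> 'a set \<Rightarrow> ('a Wt \<times> real) set" where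
  "Kset D f g A = {z \<in> WRset D. \<forall>(u, v, \<gamma>) \<in> cdom D (cconj g).
     \<exists>(xs, ys, \<alpha>) \<in> cdom D (cconj (indic A)).
        z \<in> shiftW (epiW D (cconj (fmc f xs ys \<alpha>)))
               ((u, \<lambda>_. 0, 0), real_of_ereal (csub (cconj g (u, v, \<gamma>)) (cconj (indic A) (xs, ys, \<alpha>))))}"

definition vP :: "('a \<Rightarrow> ereal) \<Rightarrow> ('a \<Rightarrow> ereal) \<Rightarrow> 'a set \<Rightarrow> ('a \<Rightarrow> real) \<Rightarrow> ereal" where
  "vP f g A p = (INF x\<in>A. fsub (f x) (g x) + ereal (p x))"

definition phiF :: "('a \<Rightarrow> ereal) \<Rightarrow> ('a \<Rightarrow> ereal) \<Rightarrow> 'a set \<Rightarrow> ('a \<Rightarrow> real) \<Rightarrow> 'a Wt \<Rightarrow> 'a Wt \<Rightarrow> ereal" where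
  "phiF f g A p w z = (case w of (u, v, \<gamma>) \<Rightarrow> case z of (xs, ys, \<alpha>) \<Rightarrow>
     csub (csub (cconj g (u, v, \<gamma>)) (cconj f (\<lambda>t. u t - xs t - p t, \<lambda>t. - ys t, \<alpha>)))
          (cconj (indic A) (xs, ys, \<alpha>)))"

definition vDF :: "('a \<Rightarrow> real) set \<Rightarrow> ('a \<Rightarrow> ereal) \<Rightarrow> ('a \<Rightarrow> ereal) \<Rightarrow> 'a set \<Rightarrow> ('a \<Rightarrow> real) \<Rightarrow> ereal" where
  "vDF D f g A p = (SUP z\<in>Zset D. INF w\<in>cdom D (cconj g). phiF f g A p w z)"

definition vDFbar :: "('a \<Rightarrow> real) set \<Rightarrow> ('a \<Rightarrow> ereal) \<Rightarrow> ('a \<Rightarrow> ereal) \<Rightarrow> 'a set \<Rightarrow> ('a \<Rightarrow> real) \<Rightarrow> ereal" where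
  "vDFbar D f g A p = (INF w\<in>cdom D (cconj g). SUP z\<in>Zset D. phiF f g A p w z)"

end

theory Submission imports Defs begin

text \<open>Both inequalities can be tested on real levels \<open>t\<close>: \<open>v(D\<^sup>F\<^sub>p) \<le> v(P\<^sub>p)\<close> iff
  \<open>t \<le> v(P\<^sub>p)\<close> whenever some \<open>z\<close> has \<open>\<phi>\<^sub>p(w, z) \<ge> t\<close> for all \<open>w \<in> dom g\<^sup>c\<close>, and likewise
  for the inf-sup dual with the quantifiers over \<open>w\<close> and \<open>z\<close> swapped. At a point
  \<open>((-p, 0, r), -t)\<close> of \<open>B\<^sub>p\<close>, membership in the shifted epigraphs defining \<open>\<Omega>\<close> and \<open>K\<close> says
  exactly \<open>\<phi>\<^sub>p(w, z) \<ge> t\<close>, and membership in \<open>epi (f - g + \<delta>\<^sub>A)\<^sup>c\<close> says \<open>t \<le> v(P\<^sub>p)\<close>, because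
  the constraint \<open>\<langle>x, 0\<rangle> < r\<close> of the coupling is void. So both sides of each equivalence
  express the same implication between level sets.\<close>

lemma csub_mono_left: "a \<le> a' \<Longrightarrow> csub a b \<le> csub a' b"
  by (cases a; cases a'; cases b) (auto simp: csub_def)

lemma csub_antimono_right: "b \<le> b' \<Longrightarrow> csub a b' \<le> csub a b"
  by (cases a; cases b; cases b') (auto simp: csub_def)

lemma csub_PInfty_right [simp]: "csub a \<infinity> = -\<infinity>"
  by (cases a) (auto simp: csub_def)

lemma le_plus_real_of_csub_iff:
  assumes "G = ereal g0" "S = ereal s0"
  shows "F \<le> ereal (- t + real_of_ereal (csub G S)) \<longleftrightarrow> ereal t \<le> csub (csub G F) S"
  using assms by (cases F) (auto simp: csub_def)

lemma SUP_INF_le_iff_levels: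
  fixes \<phi> :: "'w \<Rightarrow> 'z \<Rightarrow> ereal"
  shows "(SUP z\<in>Z. INF w\<in>W. \<phi> w z) \<le> v \<longleftrightarrow>
         (\<forall>t. (\<exists>z\<in>Z. \<forall>w\<in>W. ereal t \<le> \<phi> w z) \<longrightarrow> ereal t \<le> v)"
proof
  assume le: "(SUP z\<in>Z. INF w\<in>W. \<phi> w z) \<le> v"
  show "\<forall>t. (\<exists>z\<in>Z. \<forall>w\<in>W. ereal t \<le> \<phi> w z) \<longrightarrow> ereal t \<le> v"
  proof (intro allI impI)
    fix t assume "\<exists>z\<in>Z. \<forall>w\<in>W. ereal t \<le> \<phi> w z"
    then obtain z where z: "z \<in> Z" "\<forall>w\<in>W. ereal t \<le> \<phi> w z" by blast
    then have "ereal t \<le> (INF w\<in>W. \<phi> w z)" by (simp add: le_INF_iff)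
    also have "\<dots> \<le> (SUP z\<in>Z. INF w\<in>W. \<phi> w z)" using z(1) by (rule SUP_upper)
    finally show "ereal t \<le> v" using le by (rule order_trans)
  qed
next
  assume levels: "\<forall>t. (\<exists>z\<in>Z. \<forall>w\<in>W. ereal t \<le> \<phi> w z) \<longrightarrow> ereal t \<le> v"
  show "(SUP z\<in>Z. INF w\<in>W. \<phi> w z) \<le> v"
  proof (rule ccontr)
    assume "\<not> ?thesis"
    then obtain z where z: "z \<in> Z" "v < (INF w\<in>W. \<phi> w z)" by (auto simp: not_le less_SUP_iff)
    then obtain t where t: "v < ereal t" "ereal t < (INF w\<in>W. \<phi> w z)" using ereal_dense2 by blast
    have "\<forall>w\<in>W. ereal t \<le> \<phi> w z" using less_INF_D[OF t(2)] by (auto intro: less_imp_le)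
    then have "ereal t \<le> v" using levels z(1) by blast
    with t(1) show False by simp
  qed
qed

lemma INF_SUP_le_iff_levels:
  fixes \<phi> :: "'w \<Rightarrow> 'z \<Rightarrow> ereal"
  shows "(INF w\<in>W. SUP z\<in>Z. \<phi> w z) \<le> v \<longleftrightarrow>
         (\<forall>t. (\<forall>w\<in>W. \<exists>z\<in>Z. ereal t \<le> \<phi> w z) \<longrightarrow> ereal t \<le> v)"
proof
  assume le: "(INF w\<in>W. SUP z\<in>Z. \<phi> w z) \<le> v"
  show "\<forall>t. (\<forall>w\<in>W. \<exists>z\<in>Z. ereal t \<le> \<phi> w z) \<longrightarrow> ereal t \<le> v"
  proof (intro allI impI)
    fix t assume levels: "\<forall>w\<in>W. \<exists>z\<in>Z. ereal t \<le> \<phi> w z"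
    have "ereal t \<le> (SUP z\<in>Z. \<phi> w z)" if "w \<in> W" for w
      using levels that by (auto intro: SUP_upper2)
    then have "ereal t \<le> (INF w\<in>W. SUP z\<in>Z. \<phi> w z)" by (rule INF_greatest)
    then show "ereal t \<le> v" using le by (rule order_trans)
  qed
next
  assume levels: "\<forall>t. (\<forall>w\<in>W. \<exists>z\<in>Z. ereal t \<le> \<phi> w z) \<longrightarrow> ereal t \<le> v"
  show "(INF w\<in>W. SUP z\<in>Z. \<phi> w z) \<le> v"
  proof (rule ccontr)
    assume "\<not> ?thesis"
    then obtain t where t: "v < ereal t" "ereal t < (INF w\<in>W. SUP z\<in>Z. \<phi> w z)"
      using ereal_dense2 by (meson not_le)
    have "\<exists>z\<in>Z. ereal t \<le> \<phi> w z" if "w \<in> W" for w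
      using less_INF_D[OF t(2) that] by (auto simp: less_SUP_iff intro: less_imp_le)
    then have "ereal t \<le> v" using levels by blast
    with t(1) show False by simp
  qed
qed

lemma cpl_antimono: "\<alpha> \<le> \<alpha>' \<Longrightarrow> cpl x (xs, ys, \<alpha>') \<le> cpl x (xs, ys, \<alpha>)"
  by (auto simp: cpl_def)

lemma cconj_antimono: "\<alpha> \<le> \<alpha>' \<Longrightarrow> cconj h (xs, ys, \<alpha>') \<le> cconj h (xs, ys, \<alpha>)"
  unfolding cconj_def by (rule SUP_mono') (blast intro: csub_mono_left cpl_antimono)

lemma cconj_upper: "csub (cpl x w) (h x) \<le> cconj h w"
  unfolding cconj_def by (rule SUP_upper) simp

lemma cconj_neq_MInfty:
  assumes "h x = ereal a"
  shows "cconj h w \<noteq> -\<infinity>"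
proof -
  have "csub (cpl x w) (h x) \<noteq> -\<infinity>" using assms
    by (cases w rule: prod_cases3) (auto simp: cpl_def csub_def)
  then show ?thesis using cconj_upper[of x w h] by auto
qed

lemma cconj_indic_zero_le: "cconj (indic A) (\<lambda>_. 0, \<lambda>_. 0, 1) \<le> 0"
  unfolding cconj_def by (rule SUP_least) (auto simp: cpl_def indic_def csub_def)

text \<open>Since \<open>r > 0\<close>, the coupling with \<open>(-p + u, 0, r)\<close> is finite everywhere; outside the halfspace
  \<open>\<langle>x, -y*\<rangle> < \<alpha>\<close> both sides are \<open>+\<infinity>\<close> where \<open>f\<close> is finite and \<open>-\<infinity>\<close> where it is not, by the
  conventions of \<open>fsub\<close> and \<open>csub\<close>.\<close>

lemma cconj_fmc:
  assumes "r > 0" and "\<forall>x. f x \<noteq> -\<infinity>"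
  shows "cconj (fmc f xs ys \<alpha>) (\<lambda>t. - p t + u t, \<lambda>t. 0, r)
       = cconj f (\<lambda>t. u t - xs t - p t, \<lambda>t. - ys t, \<alpha>)"
  unfolding cconj_def
proof (rule SUP_cong[OF refl])
  fix x
  show "csub (cpl x (\<lambda>t. - p t + u t, \<lambda>t. 0, r)) (fmc f xs ys \<alpha> x)
      = csub (cpl x (\<lambda>t. u t - xs t - p t, \<lambda>t. - ys t, \<alpha>)) (f x)"
    using assms by (cases "f x") (auto simp: cpl_def fmc_def fsub_def csub_def)
qed

lemma cconj_objective:
  assumes "r > 0" and "A \<noteq> {}"
  shows "cconj (\<lambda>x. fsub (f x) (g x) + indic A x) (\<lambda>x. - p x, \<lambda>_. 0, r) = - vP f g A p"
proof -
  have term_in: "csub (cpl x (\<lambda>x. - p x, \<lambda>_. 0, r)) (fsub (f x) (g x) + indic A x)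
      = - (fsub (f x) (g x) + ereal (p x))" if "x \<in> A" for x
    using that assms(1)
    by (cases "fsub (f x) (g x)") (auto simp: cpl_def indic_def csub_def)
  have term_out: "csub (cpl x (\<lambda>x. - p x, \<lambda>_. 0, r)) (fsub (f x) (g x) + indic A x) = -\<infinity>"
    if "x \<notin> A" for x
    using that assms(1) by (auto simp: cpl_def indic_def)
  have "cconj (\<lambda>x. fsub (f x) (g x) + indic A x) (\<lambda>x. - p x, \<lambda>_. 0, r)
      = (SUP x\<in>A. - (fsub (f x) (g x) + ereal (p x)))"
    unfolding cconj_def
  proof (rule SUP_eq)
    fix x
    obtain a where "a \<in> A" using assms(2) by blast
    then show "\<exists>a\<in>A. csub (cpl x (\<lambda>x. - p x, \<lambda>_. 0, r)) (fsub (f x) (g x) + indic A x)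
        \<le> - (fsub (f a) (g a) + ereal (p a))"
      using term_in term_out by (cases "x \<in> A") force+
  next
    fix a assume "a \<in> A"
    then show "\<exists>x\<in>UNIV. - (fsub (f a) (g a) + ereal (p a))
        \<le> csub (cpl x (\<lambda>x. - p x, \<lambda>_. 0, r)) (fsub (f x) (g x) + indic A x)"
      using term_in by (metis UNIV_I order_refl)
  qed
  then show ?thesis by (simp add: vP_def ereal_SUP_uminus_eq)
qed

lemma shiftW_mem:
  "((x, y, c), r) \<in> shiftW E ((a, b, c'), d) \<longleftrightarrow>
   ((\<lambda>t. x t + a t, \<lambda>t. y t + b t, c + c'), r + d) \<in> E"
proof
  assume "((x, y, c), r) \<in> shiftW E ((a, b, c'), d)"
  then obtain x' y' c0 r' where m: "((x', y', c0), r') \<in> E"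
    and e: "x = (\<lambda>t. x' t - a t)" "y = (\<lambda>t. y' t - b t)" "c = c0 - c'" "r = r' - d"
    unfolding shiftW_def by (auto simp: image_iff)
  have "(\<lambda>t. x t + a t) = x'" "(\<lambda>t. y t + b t) = y'" using e by auto
  then show "((\<lambda>t. x t + a t, \<lambda>t. y t + b t, c + c'), r + d) \<in> E" using m e by simp
next
  assume "((\<lambda>t. x t + a t, \<lambda>t. y t + b t, c + c'), r + d) \<in> E"
  then show "((x, y, c), r) \<in> shiftW E ((a, b, c'), d)"
    unfolding shiftW_def prod.case image_iff by (rule bexI[rotated]) simp
qed

definition Bpt :: "('a \<Rightarrow> real) \<Rightarrow> real \<Rightarrow> real \<Rightarrow> 'a Wt \<times> real" where
  "Bpt p r s = ((\<lambda>x. - p x, \<lambda>_. 0, r), s)"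

lemma Bset_subset_iff_levels:
  assumes "\<And>r t. r > 0 \<Longrightarrow> Bpt p r (- t) \<in> X \<longleftrightarrow> P t"
    and "\<And>r t. r > 0 \<Longrightarrow> Bpt p r (- t) \<in> E \<longleftrightarrow> Q t"
  shows "X \<inter> Bset p \<subseteq> E \<inter> Bset p \<longleftrightarrow> (\<forall>t. P t \<longrightarrow> Q t)"
proof -
  have Bset_eq: "Bset p = {Bpt p r (- t) | r t. r > 0}"
    by (auto simp: Bset_def Bpt_def) (metis minus_minus)
  show ?thesis
  proof
    assume sub: "X \<inter> Bset p \<subseteq> E \<inter> Bset p"
    show "\<forall>t. P t \<longrightarrow> Q t"
    proof (intro allI impI)
      fix t assume "P t"
      then have "Bpt p 1 (- t) \<in> X \<inter> Bset p" using assms(1)[of 1 t] Bset_eq by auto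
      then show "Q t" using sub assms(2)[of 1 t] by auto
    qed
  qed (use assms Bset_eq in fastforce)
qed

definition shifted_epi ::
    "('a \<Rightarrow> real) set \<Rightarrow> ('a \<Rightarrow> ereal) \<Rightarrow> ('a \<Rightarrow> ereal) \<Rightarrow> 'a set \<Rightarrow> 'a Wt \<Rightarrow> 'a Wt
     \<Rightarrow> ('a Wt \<times> real) set" where
  "shifted_epi D f g A w z = (case w of (u, v, \<gamma>) \<Rightarrow> case z of (xs, ys, \<alpha>) \<Rightarrow>
     shiftW (epiW D (cconj (fmc f xs ys \<alpha>)))
       ((u, \<lambda>_. 0, 0), real_of_ereal (csub (cconj g (u, v, \<gamma>)) (cconj (indic A) (xs, ys, \<alpha>)))))"

lemma Omega_eq_shifted_epi:
  "Omega D f g A = (\<Union>z \<in> cdom D (cconj (indic A)).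
     {q \<in> WRset D. \<forall>w \<in> cdom D (cconj g). q \<in> shifted_epi D f g A w z})"
  unfolding Omega_def shifted_epi_def by (simp add: prod.case_distrib case_prod_beta)

lemma Kset_eq_shifted_epi:
  "Kset D f g A = {q \<in> WRset D. \<forall>w \<in> cdom D (cconj g).
     \<exists>z \<in> cdom D (cconj (indic A)). q \<in> shifted_epi D f g A w z}"
  unfolding Kset_def shifted_epi_def by (simp add: prod.case_distrib case_prod_beta)

locale dc_problem =
  fixes D :: "('a::real_vector \<Rightarrow> real) set" and f g :: "'a \<Rightarrow> ereal"
    and A :: "'a set" and p :: "'a \<Rightarrow> real"
  assumes dual_pair: "dual_pair D" and p_in_D: "p \<in> D"
    and f_neq_MInfty: "\<forall>x. f x \<noteq> -\<infinity>" and g_finite: "\<exists>x c. g x = ereal c"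
    and A_nonempty: "A \<noteq> {}"
begin

abbreviation "dom_gc \<equiv> cdom D (cconj g)"
abbreviation "dom_Ac \<equiv> cdom D (cconj (indic A))"
abbreviation "\<phi> \<equiv> phiF f g A p"

lemma zero_in_D: "(\<lambda>_. 0) \<in> D"
  using dual_pair by (simp add: dual_pair_def)

lemma neg_p_plus_in_D:
  assumes "u \<in> D"
  shows "(\<lambda>t. - p t + u t) \<in> D"
proof -
  have add: "\<forall>l\<in>D. \<forall>m\<in>D. (\<lambda>x. l x + m x) \<in> D"
    and scale: "\<forall>l\<in>D. \<forall>c. (\<lambda>x. c * l x) \<in> D"
    using dual_pair by (simp_all add: dual_pair_def)
  have "(\<lambda>t. (-1) * p t + u t) \<in> D"
    using bspec[OF bspec[OF add spec[OF bspec[OF scale p_in_D], of "-1"]] assms] .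
  then show ?thesis by simp
qed

lemma Bpt_in_WRset: "Bpt p r s \<in> WRset D"
  using neg_p_plus_in_D[OF zero_in_D] zero_in_D by (simp add: Bpt_def WRset_def Wset_def)

lemma cconj_g_finite:
  assumes "w \<in> dom_gc"
  shows "cconj g w = ereal (real_of_ereal (cconj g w))"
proof -
  obtain x c where "g x = ereal c" using g_finite by blast
  then have "cconj g w \<noteq> -\<infinity>" by (rule cconj_neq_MInfty)
  then show ?thesis using assms by (cases "cconj g w") (auto simp: cdom_def)
qed

lemma cconj_indic_finite:
  assumes "z \<in> dom_Ac"
  shows "cconj (indic A) z = ereal (real_of_ereal (cconj (indic A) z))"
proof -
  obtain a where "a \<in> A" using A_nonempty by blast
  then have "cconj (indic A) z \<noteq> -\<infinity>" by (intro cconj_neq_MInfty[of _ a 0]) (simp add: indic_def)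
  then show ?thesis using assms by (cases "cconj (indic A) z") (auto simp: cdom_def)
qed

lemma Bpt_mem_shifted_epi_iff:
  assumes r: "r > 0" and w: "w \<in> dom_gc" and z: "z \<in> dom_Ac"
  shows "Bpt p r (- t) \<in> shifted_epi D f g A w z \<longleftrightarrow> ereal t \<le> \<phi> w z"
proof -
  obtain u v \<gamma> xs ys \<alpha> where wz: "w = (u, v, \<gamma>)" "z = (xs, ys, \<alpha>)"
    by (cases w rule: prod_cases3, cases z rule: prod_cases3)
  have "u \<in> D" using w wz by (simp add: cdom_def Wset_def)
  have "Bpt p r (- t) \<in> shifted_epi D f g A w z \<longleftrightarrow>
      cconj (fmc f xs ys \<alpha>) (\<lambda>t. - p t + u t, \<lambda>t. 0, r)
        \<le> ereal (- t + real_of_ereal (csub (cconj g w) (cconj (indic A) z)))"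
    unfolding Bpt_def shifted_epi_def wz prod.case shiftW_mem
    using neg_p_plus_in_D[OF \<open>u \<in> D\<close>] zero_in_D by (simp add: epiW_def Wset_def)
  also have "\<dots> \<longleftrightarrow> ereal t \<le> \<phi> w z"
    unfolding cconj_fmc[OF r f_neq_MInfty] phiF_def wz prod.case
    by (rule le_plus_real_of_csub_iff[OF cconj_g_finite[OF w, unfolded wz]
          cconj_indic_finite[OF z, unfolded wz]])
  finally show ?thesis .
qed

lemma Bpt_mem_Omega_iff:
  "r > 0 \<Longrightarrow> Bpt p r (- t) \<in> Omega D f g A \<longleftrightarrow> (\<exists>z\<in>dom_Ac. \<forall>w\<in>dom_gc. ereal t \<le> \<phi> w z)"
  unfolding Omega_eq_shifted_epi using Bpt_in_WRset Bpt_mem_shifted_epi_iff by auto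

lemma Bpt_mem_Kset_iff:
  "r > 0 \<Longrightarrow> Bpt p r (- t) \<in> Kset D f g A \<longleftrightarrow> (\<forall>w\<in>dom_gc. \<exists>z\<in>dom_Ac. ereal t \<le> \<phi> w z)"
  unfolding Kset_eq_shifted_epi using Bpt_in_WRset Bpt_mem_shifted_epi_iff by auto

lemma Bpt_mem_epi_objective_iff:
  assumes "r > 0"
  shows "Bpt p r (- t) \<in> epiW D (cconj (\<lambda>x. fsub (f x) (g x) + indic A x))
     \<longleftrightarrow> ereal t \<le> vP f g A p"
proof -
  have "Bpt p r (- t) \<in> epiW D (cconj (\<lambda>x. fsub (f x) (g x) + indic A x))
      \<longleftrightarrow> - vP f g A p \<le> ereal (- t)"
    using Bpt_in_WRset[of r "- t"] cconj_objective[OF assms A_nonempty, of f g p]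
    by (simp add: Bpt_def epiW_def WRset_def)
  also have "\<dots> \<longleftrightarrow> ereal t \<le> vP f g A p"
    by (subst ereal_uminus_le_reorder) simp
  finally show ?thesis .
qed

lemma phiF_mono_level:
  assumes "\<alpha> \<le> \<alpha>'"
  shows "\<phi> w (xs, ys, \<alpha>) \<le> \<phi> w (xs, ys, \<alpha>')"
proof -
  obtain u v \<gamma> where w: "w = (u, v, \<gamma>)" by (cases w rule: prod_cases3)
  have f: "cconj f (\<lambda>t. u t - xs t - p t, \<lambda>t. - ys t, \<alpha>')
      \<le> cconj f (\<lambda>t. u t - xs t - p t, \<lambda>t. - ys t, \<alpha>)"
    and A: "cconj (indic A) (xs, ys, \<alpha>') \<le> cconj (indic A) (xs, ys, \<alpha>)"
    using assms by (simp_all add: cconj_antimono)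
  show ?thesis unfolding w phiF_def prod.case
    using csub_mono_left[OF csub_antimono_right[OF f]] csub_antimono_right[OF A]
    by (rule order_trans)
qed

lemma phiF_outside_dom_Ac: "z \<in> Zset D \<Longrightarrow> z \<notin> dom_Ac \<Longrightarrow> \<phi> w z = -\<infinity>"
  by (cases w rule: prod_cases3, cases z rule: prod_cases3)
    (auto simp: phiF_def cdom_def Zset_def Wset_def)

lemma zero_level_one_in_dom_Ac: "(\<lambda>_. 0, \<lambda>_. 0, 1) \<in> dom_Ac"
  using cconj_indic_zero_le[of A] zero_in_D by (auto simp: cdom_def Wset_def)

lemma dom_Ac_raise_level:
  assumes "(xs, ys, \<alpha>) \<in> dom_Ac"
  shows "(xs, ys, max \<alpha> 1) \<in> Zset D \<inter> dom_Ac"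
proof -
  have "cconj (indic A) (xs, ys, max \<alpha> 1) \<le> cconj (indic A) (xs, ys, \<alpha>)"
    by (rule cconj_antimono) simp
  also have "\<dots> < \<infinity>" using assms by (simp add: cdom_def)
  finally show ?thesis using assms by (simp add: cdom_def Zset_def Wset_def)
qed

text \<open>In both dual values the supremum over \<open>Z\<close> may be taken over \<open>dom \<delta>\<^sub>A\<^sup>c\<close> instead: outside
  of it \<open>\<phi>\<^sub>p = -\<infinity>\<close>, and raising \<open>\<alpha>\<close> keeps a point of \<open>dom \<delta>\<^sub>A\<^sup>c\<close> there while increasing \<open>\<phi>\<^sub>p\<close>.\<close>

lemma Zset_dominated_by_dom_Ac:
  assumes "z \<in> Zset D"
  shows "\<exists>z'\<in>dom_Ac. \<forall>w. \<phi> w z \<le> \<phi> w z'"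
proof (cases "z \<in> dom_Ac")
  case False
  then have "\<forall>w. \<phi> w z \<le> \<phi> w (\<lambda>_. 0, \<lambda>_. 0, 1)" by (simp add: phiF_outside_dom_Ac[OF assms])
  then show ?thesis using zero_level_one_in_dom_Ac by blast
qed blast

lemma dom_Ac_dominated_by_Zset:
  assumes "z \<in> dom_Ac"
  shows "\<exists>z'\<in>Zset D. \<forall>w. \<phi> w z \<le> \<phi> w z'"
proof -
  obtain xs ys \<alpha> where z: "z = (xs, ys, \<alpha>)" by (cases z rule: prod_cases3)
  have "\<forall>w. \<phi> w z \<le> \<phi> w (xs, ys, max \<alpha> 1)" unfolding z by (simp add: phiF_mono_level)
  then show ?thesis using dom_Ac_raise_level assms unfolding z by blast
qed

lemma vDF_eq_SUP_dom_Ac: "vDF D f g A p = (SUP z\<in>dom_Ac. INF w\<in>dom_gc. \<phi> w z)"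
  unfolding vDF_def
  by (rule SUP_eq) (meson INF_mono' Zset_dominated_by_dom_Ac dom_Ac_dominated_by_Zset)+

lemma vDFbar_eq_INF_SUP_dom_Ac: "vDFbar D f g A p = (INF w\<in>dom_gc. SUP z\<in>dom_Ac. \<phi> w z)"
  unfolding vDFbar_def
  by (intro INF_cong refl SUP_eq) (meson Zset_dominated_by_dom_Ac dom_Ac_dominated_by_Zset)+

end

theorem proposition6p2:
  fixes D :: "('a::real_vector \<Rightarrow> real) set" and f g :: "'a \<Rightarrow> ereal"
    and A :: "'a set" and p :: "'a \<Rightarrow> real"
  assumes "dual_pair D" and "\<exists>x::'a. x \<noteq> 0"
    and "proper_convex f" and "proper_convex g"
    and "{x. f x < \<infinity>} \<subseteq> {x. g x < \<infinity>}"
    and "A \<noteq> {}"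
    and "p \<in> D"
  shows "(vP f g A p \<ge> vDF D f g A p \<longleftrightarrow>
            Omega D f g A \<inter> Bset p \<subseteq>
              epiW D (cconj (\<lambda>x. fsub (f x) (g x) + indic A x)) \<inter> Bset p)
       \<and> (vP f g A p \<ge> vDFbar D f g A p \<longleftrightarrow>
            Kset D f g A \<inter> Bset p \<subseteq>
              epiW D (cconj (\<lambda>x. fsub (f x) (g x) + indic A x)) \<inter> Bset p)"
proof -
  obtain x where "g x < \<infinity>" and "g x \<noteq> -\<infinity>"
    using \<open>proper_convex g\<close> unfolding proper_convex_def by blast
  then have "\<exists>x c. g x = ereal c" by (cases "g x") auto
  then interpret dc_problem D f g A p
    using assms unfolding proper_convex_def by unfold_locales auto
  show ?thesis
    unfolding vDF_eq_SUP_dom_Ac vDFbar_eq_INF_SUP_dom_Ac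
      SUP_INF_le_iff_levels INF_SUP_le_iff_levels
    using Bset_subset_iff_levels[OF Bpt_mem_Omega_iff Bpt_mem_epi_objective_iff]
      Bset_subset_iff_levels[OF Bpt_mem_Kset_iff Bpt_mem_epi_objective_iff]
    by simp
qed

end
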